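(* Let $p\in(0,1]$ and let $Q=(q_{j,k})_{j,k\geq 0}$ be the generator on $\mathbb N_0$ given by $q_{j,j+1}=jp$, $q_{j,k}=\binom{j}{k}p^k(1-p)^{j-k}$ for $0\leq k\leq j-1$, $q_{j,j}=-(jp+1-p^j)$, and $q_{j,k}=0$ otherwise. Suppose $(a_k)_{k\geq 1}$ is a quasi-stationary distribution for $Q$ with eigenvalue $-\lambda$, i.e. $a_k\geq 0$, $\sum_{k\geq 1}a_k=1$ and $\sum_{j\geq 1}a_jq_{j,k}=-\lambda a_k$ for every $k\geq 1$, and suppose that $a$ has finite mean, $\sum_{k\geq1}ka_k<\infty$. Then $\lambda=1-2p$.
   Context: $Q$ is the generator of the degree of a tracked vertex in the continuous-time partial duplication graph; state $0$ is absorbing. A quasi-stationary distribution is a non-negative left eigenvector of $Q$ restricted to $\mathbb N=\{1,2,\dots\}$, summing to $1$. *)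

theory Defs
  imports "HOL-Analysis.Analysis"
begin

text \<open>Generator of the degree of a tracked vertex in the continuous-time
partial duplication graph, with parameter p.\<close>
definition pdQ :: "real \<Rightarrow> nat \<Rightarrow> nat \<Rightarrow> real" where
  "pdQ p j k =
     (if k = j + 1 then real j * p
      else if k < j then real (j choose k) * p ^ k * (1 - p) ^ (j - k)
      else if k = j then - (real j * p + 1 - p ^ j)
      else 0)"

definition is_qsd :: "real \<Rightarrow> (nat \<Rightarrow> real) \<Rightarrow> real \<Rightarrow> bool" where
  "is_qsd p a lam \<longleftrightarrow>
     (\<forall>k\<ge>1. a k \<ge> 0) \<and>
     (a has_sum 1) {1..} \<and>
     (\<forall>k\<ge>1. ((\<lambda>j. a j * pdQ p j k) has_sum (- lam * a k)) {1..})"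

end

theory Submission
  imports Defs
begin

(* Multiply the eigen-equation of column k by k and sum over k \<le> N. The up-jump terms
   telescope, and the down-jumps out of a state j \<le> N contribute exactly
   j p - j p^j, the mean of Binomial(j, p) without its k = j term. So with S_N the
   truncated mean and m the full mean,
     p N (N + 1) a_N = (2p - 1 + lam) S_N + T_N,
   where the contribution T_N of down-jumps from states j > N lies between 0 and
   p (m - S_N). Hence N (N + 1) a_N converges to (2p - 1 + lam) m / p; as the series of
   N a_N converges, this limit must be 0, and m \<ge> 1 forces lam = 1 - 2p. *)

lemma has_sum_diff:
  fixes f g :: "'a \<Rightarrow> 'b::topological_ab_group_add"
  assumes "(f has_sum s) A" "(g has_sum t) A"
  shows "((\<lambda>x. f x - g x) has_sum (s - t)) A"
proof -
  have "((\<lambda>x. - g x) has_sum (- t)) A"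
    using assms(2) by (simp add: has_sum_uminus)
  from has_sum_add[OF assms(1) this] show ?thesis
    by simp
qed

lemma has_sum_sum:
  fixes f :: "'i \<Rightarrow> 'a \<Rightarrow> 'b::topological_comm_monoid_add"
  assumes "finite I" "\<And>i. i \<in> I \<Longrightarrow> (f i has_sum s i) A"
  shows "((\<lambda>x. \<Sum>i\<in>I. f i x) has_sum (\<Sum>i\<in>I. s i)) A"
  using assms by (induction I rule: finite_induct) (auto intro: has_sum_add)

lemma has_sum_tail_atLeast_1:
  fixes f :: "nat \<Rightarrow> 'b::topological_ab_group_add"
  assumes "(f has_sum s) {1..}"
  shows "((\<lambda>j. if j \<le> N then 0 else f j) has_sum (s - (\<Sum>j=1..N. f j))) {1..}"
proof -
  have "((\<lambda>j. if j \<le> N then f j else 0) has_sum (\<Sum>j=1..N. f j)) {1..}"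
    by (rule has_sum_finite_neutralI[where B = "{1..N}"]) auto
  from has_sum_diff[OF assms this] show ?thesis
    by (rule has_sum_cong[THEN iffD1, rotated]) simp
qed

lemma sums_if_has_sum_atLeast_1:
  fixes f :: "nat \<Rightarrow> 'b::topological_comm_monoid_add"
  assumes "f 0 = 0" "(f has_sum s) {1..}"
  shows "f sums s"
proof (rule has_sum_imp_sums)
  show "(f has_sum s) UNIV"
    using assms by (subst (asm) has_sum_cong_neutral[where T = UNIV and g = f])
      (auto simp: not_less_eq_eq)
qed

lemma sums_imp_LIMSEQ_sum_atLeast_1:
  fixes f :: "nat \<Rightarrow> 'b::{topological_comm_monoid_add, t2_space}"
  assumes "f 0 = 0" "f sums s"
  shows "(\<lambda>N. \<Sum>k=1..N. f k) \<longlonglongrightarrow> s"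
proof -
  have "(\<lambda>N. \<Sum>k=1..N. f k) = (\<lambda>N. \<Sum>k=0..N. f k)"
    unfolding One_nat_def by (intro ext sum_shift_lb_Suc0_0) (fact assms(1))
  with assms(2) show ?thesis
    by (simp add: sums_def')
qed

lemma binomial_first_moment:
  fixes x y :: "'a::comm_ring_1"
  shows "(\<Sum>k\<le>n. of_nat k * (of_nat (n choose k) * x ^ k * y ^ (n - k)))
       = of_nat n * x * (x + y) ^ (n - 1)"
proof (cases n)
  case (Suc m)
  have "(\<Sum>k\<le>Suc m. of_nat k * (of_nat (Suc m choose k) * x ^ k * y ^ (Suc m - k)))
      = (\<Sum>k\<le>m. of_nat (Suc k) * of_nat (Suc m choose Suc k) * (x * x ^ k * y ^ (m - k)))"
    by (subst sum.atMost_Suc_shift) (simp add: mult_ac)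
  also have "\<dots> = (\<Sum>k\<le>m. of_nat (Suc m) * x * (of_nat (m choose k) * x ^ k * y ^ (m - k)))"
    by (rule sum.cong) (simp_all only: of_nat_mult[symmetric] Suc_times_binomial, simp add: algebra_simps)
  also have "\<dots> = of_nat (Suc m) * x * (x + y) ^ m"
    by (simp add: binomial_ring sum_distrib_left)
  finally show ?thesis using Suc by simp
qed simp

lemma tendsto_square_weight_imp_zero:
  fixes b :: "nat \<Rightarrow> real"
  assumes "summable (\<lambda>n. real n * b n)"
    and "(\<lambda>n. real n * (real n + 1) * b n) \<longlonglongrightarrow> L"
  shows "L = 0"
proof (rule ccontr)
  assume "L \<noteq> 0"
  have "(\<lambda>n. 4 / L * (real n * (real n + 1) * b n)) \<longlonglongrightarrow> 4 / L * L"
    by (intro tendsto_intros assms(2))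
  with \<open>L \<noteq> 0\<close> have "\<forall>\<^sub>F n in sequentially. 2 < 4 / L * (real n * (real n + 1) * b n)"
    by (intro order_tendstoD(1)) auto
  then have "\<forall>\<^sub>F n in sequentially. norm (inverse (real n)) \<le> 4 / L * (real n * b n)"
  proof (rule eventually_mono)
    fix n assume "2 < 4 / L * (real n * (real n + 1) * b n)"
    then have "2 / (real n + 1) < 4 / L * (real n * b n)"
      by (simp add: field_simps)
    moreover have "inverse (real n) \<le> 2 / (real n + 1)"
      by (cases "n = 0") (simp_all add: field_simps)
    ultimately show "norm (inverse (real n)) \<le> 4 / L * (real n * b n)"
      by simp
  qed
  moreover have "summable (\<lambda>n. 4 / L * (real n * b n))"
    using assms(1) by (rule summable_mult)
  ultimately have "summable (\<lambda>n. inverse (real n))"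
    by (rule summable_comparison_test_ev)
  then show False
    using not_summable_harmonic[where 'a = real] by simp
qed

definition pd_down :: "real \<Rightarrow> nat \<Rightarrow> nat \<Rightarrow> real" where
  "pd_down p j k = (if k < j then real (j choose k) * p ^ k * (1 - p) ^ (j - k) else 0)"

lemma pdQ_eq_pd_down:
  "pdQ p j k = (if k = j + 1 then real j * p else if k = j then - (real j * p + 1 - p ^ j) else 0)
     + pd_down p j k"
  by (simp add: pdQ_def pd_down_def)

lemma qsd_down_column_has_sum:
  assumes "is_qsd p a lam" "1 \<le> k"
  shows "((\<lambda>j. a j * pd_down p j k) has_sum
           (- lam * a k - real (k - 1) * p * a (k - 1) + (real k * p + 1 - p ^ k) * a k)) {1..}"
proof -
  define e where "e j = a j * (if k = j + 1 then real j * p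
                              else if k = j then - (real j * p + 1 - p ^ j) else 0)" for j
  have "(e has_sum (real (k - 1) * p * a (k - 1) - (real k * p + 1 - p ^ k) * a k)) {1..}"
  proof (rule has_sum_finite_neutralI[where B = "{k - 1, k} \<inter> {1..}"])
    show "real (k - 1) * p * a (k - 1) - (real k * p + 1 - p ^ k) * a k
        = (\<Sum>j \<in> {k - 1, k} \<inter> {1..}. e j)"
    proof (cases "k = 1")
      case False
      with assms(2) have "{k - 1, k} \<inter> {1..} = {k - 1, k}" "k - 1 \<noteq> k"
        by auto
      then show ?thesis
        using False by (simp add: e_def algebra_simps)
    qed (simp add: e_def)
  qed (auto simp: e_def)
  moreover have "((\<lambda>j. a j * pdQ p j k) has_sum (- lam * a k)) {1..}"
    using assms unfolding is_qsd_def by blast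
  ultimately have "((\<lambda>j. a j * pdQ p j k - e j) has_sum
      (- lam * a k - (real (k - 1) * p * a (k - 1) - (real k * p + 1 - p ^ k) * a k))) {1..}"
    by (intro has_sum_diff)
  moreover have "a j * pdQ p j k - e j = a j * pd_down p j k" for j
    by (simp add: pdQ_eq_pd_down e_def ring_distribs)
  ultimately show ?thesis
    by (simp add: algebra_simps)
qed

definition down_moment :: "real \<Rightarrow> nat \<Rightarrow> nat \<Rightarrow> real" where
  "down_moment p N j = (\<Sum>k=1..N. real k * pd_down p j k)"

lemma down_moment_eq:
  assumes "j \<le> N + 1"
  shows "down_moment p N j = real j * p - real j * p ^ j"
proof -
  let ?b = "\<lambda>k. real k * (real (j choose k) * p ^ k * (1 - p) ^ (j - k))"
  have "down_moment p N j = (\<Sum>k\<in>{1..<j}. ?b k)"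
    unfolding down_moment_def
    by (rule sum.mono_neutral_cong_right) (use assms in \<open>auto simp: pd_down_def\<close>)
  also have "\<dots> = (\<Sum>k<j. ?b k)"
    by (rule sum.mono_neutral_left) auto
  also have "\<dots> = (\<Sum>k\<le>j. ?b k) - ?b j"
    by (simp add: lessThan_Suc_atMost[symmetric])
  also have "\<dots> = real j * p - real j * p ^ j"
    using binomial_first_moment[of j p "1 - p"] by simp
  finally show ?thesis .
qed

lemma down_moment_nonneg:
  assumes "0 \<le> p" "p \<le> 1"
  shows "0 \<le> down_moment p N j"
  unfolding down_moment_def pd_down_def using assms by (intro sum_nonneg) simp

lemma down_moment_le:
  assumes "0 \<le> p" "p \<le> 1"
  shows "down_moment p N j \<le> real j * p"
proof -
  have "down_moment p N j \<le> down_moment p (N + j) j"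
    unfolding down_moment_def pd_down_def
    by (rule sum_mono2) (use assms in auto)
  also have "\<dots> = real j * p - real j * p ^ j"
    by (simp add: down_moment_eq)
  also have "\<dots> \<le> real j * p"
    using assms by simp
  finally show ?thesis .
qed

lemma weighted_column_sum_identity:
  fixes a :: "nat \<Rightarrow> real"
  shows "(\<Sum>k=1..N. real k * (- lam * a k - real (k - 1) * p * a (k - 1) + (real k * p + 1 - p ^ k) * a k))
       - (\<Sum>j=1..N. a j * (real j * p - real j * p ^ j))
     = p * real N * (real N + 1) * a N - (2 * p - 1 + lam) * (\<Sum>k=1..N. real k * a k)"
  by (induction N) (simp_all add: sum.cl_ivl_Suc algebra_simps)

lemma qsd_tail_moment_has_sum:
  assumes "is_qsd p a lam"
  shows "((\<lambda>j. if j \<le> N then 0 else a j * down_moment p N j) has_sum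
           (p * real N * (real N + 1) * a N - (2 * p - 1 + lam) * (\<Sum>k=1..N. real k * a k))) {1..}"
proof -
  have "((\<lambda>j. \<Sum>k=1..N. real k * (a j * pd_down p j k)) has_sum
      (\<Sum>k=1..N. real k * (- lam * a k - real (k - 1) * p * a (k - 1) + (real k * p + 1 - p ^ k) * a k)))
      {1..}"
    using qsd_down_column_has_sum[OF assms] by (intro has_sum_sum has_sum_cmult_right) auto
  then have moment: "((\<lambda>j. a j * down_moment p N j) has_sum
      (\<Sum>k=1..N. real k * (- lam * a k - real (k - 1) * p * a (k - 1) + (real k * p + 1 - p ^ k) * a k)))
      {1..}"
    by (simp add: down_moment_def sum_distrib_left mult.left_commute)
  have finite_part: "(\<Sum>j=1..N. a j * down_moment p N j)
      = (\<Sum>j=1..N. a j * (real j * p - real j * p ^ j))"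
    by (intro sum.cong) (simp_all add: down_moment_eq)
  show ?thesis
    using has_sum_tail_atLeast_1[OF moment, of N]
    unfolding finite_part weighted_column_sum_identity .
qed

lemma qsd_moment_sandwich:
  fixes N :: nat
  assumes "is_qsd p a lam" "0 \<le> p" "p \<le> 1" "((\<lambda>k. real k * a k) has_sum m) {1..}"
  defines "S \<equiv> \<Sum>k=1..N. real k * a k"
  shows "(2 * p - 1 + lam) * S \<le> p * real N * (real N + 1) * a N"
    and "p * real N * (real N + 1) * a N \<le> (2 * p - 1 + lam) * S + p * (m - S)"
proof -
  have a_nonneg: "0 \<le> a j" if "1 \<le> j" for j
    using assms(1) that unfolding is_qsd_def by blast
  note tail = qsd_tail_moment_has_sum[OF assms(1), of N]
  show "(2 * p - 1 + lam) * S \<le> p * real N * (real N + 1) * a N"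
    using has_sum_mono[OF has_sum_0_simp tail] a_nonneg down_moment_nonneg[OF assms(2,3)]
    by (simp add: S_def)
  have "((\<lambda>j. p * (if j \<le> N then 0 else real j * a j)) has_sum p * (m - S)) {1..}"
    unfolding S_def by (intro has_sum_cmult_right has_sum_tail_atLeast_1 assms(4))
  moreover have "a j * down_moment p N j \<le> p * (real j * a j)" if "1 \<le> j" for j
    using mult_left_mono[OF down_moment_le[OF assms(2,3)] a_nonneg[OF that]] by (simp add: ac_simps)
  ultimately have "p * real N * (real N + 1) * a N - (2 * p - 1 + lam) * S \<le> p * (m - S)"
    unfolding S_def by (intro has_sum_mono[OF tail]) auto
  then show "p * real N * (real N + 1) * a N \<le> (2 * p - 1 + lam) * S + p * (m - S)"
    by simp
qed

lemma qsd_mean_ge_1: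
  assumes "is_qsd p a lam" "((\<lambda>k. real k * a k) has_sum m) {1..}"
  shows "1 \<le> m"
proof (rule has_sum_mono[OF _ assms(2)])
  show "(a has_sum 1) {1..}"
    using assms(1) by (simp add: is_qsd_def)
  show "a k \<le> real k * a k" if "k \<in> {1..}" for k
    using assms(1) that mult_right_mono[of 1 "real k" "a k"] by (simp add: is_qsd_def)
qed

lemma qsd_moment_tendsto:
  assumes "is_qsd p a lam" "0 \<le> p" "p \<le> 1" "((\<lambda>k. real k * a k) has_sum m) {1..}"
  shows "(\<lambda>N. p * real N * (real N + 1) * a N) \<longlonglongrightarrow> (2 * p - 1 + lam) * m"
proof (rule real_tendsto_sandwich)
  define S where "S N = (\<Sum>k=1..N. real k * a k)" for N
  have "S \<longlonglongrightarrow> m"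
    unfolding S_def
    by (intro sums_imp_LIMSEQ_sum_atLeast_1 sums_if_has_sum_atLeast_1 assms(4)) simp_all
  show "(\<lambda>N. (2 * p - 1 + lam) * S N) \<longlonglongrightarrow> (2 * p - 1 + lam) * m"
    by (intro tendsto_intros \<open>S \<longlonglongrightarrow> m\<close>)
  have "(\<lambda>N. (2 * p - 1 + lam) * S N + p * (m - S N)) \<longlonglongrightarrow> (2 * p - 1 + lam) * m + p * (m - m)"
    by (intro tendsto_intros \<open>S \<longlonglongrightarrow> m\<close>)
  then show "(\<lambda>N. (2 * p - 1 + lam) * S N + p * (m - S N)) \<longlonglongrightarrow> (2 * p - 1 + lam) * m"
    by simp
  show "\<forall>\<^sub>F N in sequentially. (2 * p - 1 + lam) * S N \<le> p * real N * (real N + 1) * a N"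
    "\<forall>\<^sub>F N in sequentially. p * real N * (real N + 1) * a N \<le> (2 * p - 1 + lam) * S N + p * (m - S N)"
    using qsd_moment_sandwich[OF assms] by (simp_all add: S_def)
qed

theorem proposition2:
  fixes p lam :: real and a :: "nat \<Rightarrow> real"
  assumes "0 < p" and "p \<le> 1"
    and "is_qsd p a lam"
    and "(\<lambda>k. real k * a k) summable_on {1..}"
  shows "lam = 1 - 2 * p"
proof -
  define m where "m = infsum (\<lambda>k. real k * a k) {1..}"
  have mean: "((\<lambda>k. real k * a k) has_sum m) {1..}"
    using assms(4) by (simp add: m_def)
  have "summable (\<lambda>k. real k * (p * a k))"
    using summable_mult[OF sums_summable[OF sums_if_has_sum_atLeast_1[OF _ mean]], of p]
    by (simp add: ac_simps)
  moreover have "(\<lambda>N. real N * (real N + 1) * (p * a N)) \<longlonglongrightarrow> (2 * p - 1 + lam) * m"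
    using qsd_moment_tendsto[OF assms(3) _ assms(2) mean] assms(1) by (simp add: ac_simps)
  ultimately have "(2 * p - 1 + lam) * m = 0"
    by (rule tendsto_square_weight_imp_zero)
  with qsd_mean_ge_1[OF assms(3) mean] show ?thesis
    by simp
qed

end
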